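(* Let $\Phi$ be a (Bourbaki) root system, $D$ a set of simple roots, $\Phi^+$ the positive roots with respect to $D$, $J\subseteq D$, and $\pi_J\colon\mathbb Z\Phi\to\mathbb Z\Phi/\mathbb Z(D\setminus J)$ the natural projection. Let $\alpha\in\pi_J(\Phi^+)\setminus\{0\}$ be such that $\alpha\neq m\alpha_0$ for every integer $m\ge1$ and every $\alpha_0\in\pi_J(D)\setminus\{0\}$. Then there exist non-collinear $\beta\in\pi_J(\Phi^+)\setminus\{0\}$ and $\gamma\in\pi_J(J)$ with $\alpha=\beta+\gamma$. *)

theory Defs
  imports "HOL-Analysis.Analysis"
begin

definition root_system :: "'a::euclidean_space set \<Rightarrow> bool" where
  "root_system R \<longleftrightarrow> finite R \<and> 0 \<notin> R \<and> span R = UNIV \<and>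
     (\<forall>a\<in>R. \<forall>b\<in>R. b - (2 * (b \<bullet> a) / (a \<bullet> a)) *\<^sub>R a \<in> R \<and>
                      2 * (b \<bullet> a) / (a \<bullet> a) \<in> \<int>)"

definition zspan :: "'a::real_vector set \<Rightarrow> 'a set" where
  "zspan S = {x. \<exists>F c. finite F \<and> F \<subseteq> S \<and> x = (\<Sum>v\<in>F. of_int (c v :: int) *\<^sub>R v)}"

definition is_base :: "'a::euclidean_space set \<Rightarrow> 'a set \<Rightarrow> bool" where
  "is_base R D \<longleftrightarrow> D \<subseteq> R \<and> independent D \<and> span D = UNIV \<and>
     (\<forall>b\<in>R. \<exists>c::'a \<Rightarrow> int. b = (\<Sum>d\<in>D. of_int (c d) *\<^sub>R d) \<and>
                  ((\<forall>d\<in>D. c d \<ge> 0) \<or> (\<forall>d\<in>D. c d \<le> 0)))"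

definition pos_roots :: "'a::euclidean_space set \<Rightarrow> 'a set \<Rightarrow> 'a set" where
  "pos_roots R D = {b\<in>R. \<exists>c::'a \<Rightarrow> int. b = (\<Sum>d\<in>D. of_int (c d) *\<^sub>R d) \<and> (\<forall>d\<in>D. c d \<ge> 0)}"

text \<open>Natural projection Z R -> Z R / Z(D - J), elements of the quotient being cosets
  x + Z(D - J).\<close>
definition projJ :: "'a::euclidean_space set \<Rightarrow> 'a set \<Rightarrow> 'a \<Rightarrow> 'a set" where
  "projJ D J x = (\<lambda>l. x + l) ` zspan (D - J)"

end

theory Submission
  imports Defs
begin

text \<open>
  Among the positive roots with the same image as \<open>b\<close> choose \<open>b0\<close> of minimal height.
  The hypotheses on the image say exactly that the \<open>J\<close>-coordinates of \<open>b0\<close> are nonzero at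
  two distinct simple roots; in particular \<open>b0\<close> is not simple. Expanding \<open>0 < b0 \<bullet> b0\<close> in
  coordinates yields a simple root \<open>d\<close> with positive coordinate and \<open>0 < b0 \<bullet> d\<close>, so
  \<open>b0 - d\<close> is again a positive root, and minimality of the height forces \<open>d \<in> J\<close>.
  Then \<open>b0 - d\<close> still has a nonzero \<open>J\<close>-coordinate away from \<open>d\<close>, which makes the images
  of \<open>b0 - d\<close> and \<open>d\<close> independent.
\<close>

lemma representation_lincomb:
  fixes D :: "'a::euclidean_space set"
  assumes "independent D"
  shows "representation D (\<Sum>v\<in>D. f v *\<^sub>R v) = (\<lambda>w. if w \<in> D then f w else 0)"
proof -
  have "representation D (\<Sum>v\<in>D. f v *\<^sub>R v) = (\<lambda>w. \<Sum>v\<in>D. representation D (f v *\<^sub>R v) w)"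
    using assms by (intro real_vector.representation_sum) (auto intro: span_scale span_base)
  also have "\<dots> = (\<lambda>w. \<Sum>v\<in>D. f v * (if w = v then 1 else 0))"
    using assms by (intro ext sum.cong refl)
      (simp add: real_vector.representation_scale real_vector.representation_basis span_base)
  also have "\<dots> = (\<lambda>w. if w \<in> D then f w else 0)"
    using finiteI_independent[OF assms] by (simp add: if_distrib sum.delta' cong: if_cong)
  finally show ?thesis .
qed

lemma zspan_iff_representation:
  fixes D :: "'a::euclidean_space set"
  assumes "independent D"
  shows "x \<in> zspan D \<longleftrightarrow> x \<in> span D \<and> (\<forall>v\<in>D. representation D x v \<in> \<int>)"
proof
  assume "x \<in> zspan D"
  then obtain F c where F: "finite F" "F \<subseteq> D" and x: "x = (\<Sum>v\<in>F. of_int (c v) *\<^sub>R v)"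
    unfolding zspan_def by blast
  have "independent F" using assms F(2) by (rule independent_mono)
  have "x \<in> span F" unfolding x by (intro span_sum span_scale span_base)
  then have "representation D x = representation F x"
    using real_vector.representation_extend[OF assms _ F(2)] by blast
  also have "\<dots> = (\<lambda>w. if w \<in> F then of_int (c w) else 0)"
    unfolding x by (rule representation_lincomb) fact
  finally show "x \<in> span D \<and> (\<forall>v\<in>D. representation D x v \<in> \<int>)"
    using \<open>x \<in> span F\<close> span_mono[OF F(2)] by auto
next
  assume x: "x \<in> span D \<and> (\<forall>v\<in>D. representation D x v \<in> \<int>)"
  have "x = (\<Sum>v\<in>D. representation D x v *\<^sub>R v)"
    using x finiteI_independent[OF assms] by (simp add: real_vector.sum_representation_eq assms)
  also have "\<dots> = (\<Sum>v\<in>D. of_int \<lfloor>representation D x v\<rfloor> *\<^sub>R v)"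
    using x by (intro sum.cong) auto
  finally show "x \<in> zspan D"
    using finiteI_independent[OF assms] unfolding zspan_def by (intro CollectI exI conjI) auto
qed

lemma zspan_zero: "0 \<in> zspan S"
  unfolding zspan_def by (intro CollectI exI[of _ "{}"]) auto

lemma zspan_superset:
  "S \<subseteq> zspan S"
proof
  fix v assume "v \<in> S"
  then show "v \<in> zspan S"
    unfolding zspan_def by (intro CollectI exI[of _ "{v}"] exI[of _ "\<lambda>_. 1"]) auto
qed

lemma zspan_add:
  fixes S :: "'a::euclidean_space set"
  assumes "independent S" "x \<in> zspan S" "y \<in> zspan S"
  shows "x + y \<in> zspan S"
  using assms by (simp add: zspan_iff_representation span_add real_vector.representation_add)

lemma zspan_diff:
  fixes S :: "'a::euclidean_space set"
  assumes "independent S" "x \<in> zspan S" "y \<in> zspan S"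
  shows "x - y \<in> zspan S"
  using assms by (simp add: zspan_iff_representation span_diff real_vector.representation_diff)

lemma zspan_scaleR_of_int:
  fixes S :: "'a::euclidean_space set"
  assumes "independent S" "x \<in> zspan S"
  shows "of_int k *\<^sub>R x \<in> zspan S"
  using assms by (simp add: zspan_iff_representation span_scale real_vector.representation_scale)

lemma span_subset_iff_representation:
  fixes B :: "'a::euclidean_space set"
  assumes "independent B" "B' \<subseteq> B" "x \<in> span B"
  shows "x \<in> span B' \<longleftrightarrow> (\<forall>e\<in>B - B'. representation B x e = 0)"
proof
  assume "x \<in> span B'"
  then have "representation B x = representation B' x"
    using real_vector.representation_extend[OF assms(1) _ assms(2)] by blast
  then show "\<forall>e\<in>B - B'. representation B x e = 0"
    using real_vector.representation_ne_zero[of B' x] by auto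
next
  assume zero: "\<forall>e\<in>B - B'. representation B x e = 0"
  have "x = (\<Sum>v\<in>B. representation B x v *\<^sub>R v)"
    using assms finiteI_independent[OF assms(1)] by (simp add: real_vector.sum_representation_eq)
  also have "\<dots> \<in> span B'"
    using zero by (intro span_sum) (metis DiffI scale_zero_left span_base span_scale span_zero)
  finally show "x \<in> span B'" .
qed

lemma zspan_Diff_iff:
  fixes D :: "'a::euclidean_space set"
  assumes "independent D" "J \<subseteq> D" "x \<in> zspan D"
  shows "x \<in> zspan (D - J) \<longleftrightarrow> (\<forall>e\<in>J. representation D x e = 0)"
proof -
  have indep: "independent (D - J)" using assms(1) by (rule independent_mono) blast
  have x: "x \<in> span D" "\<forall>v\<in>D. representation D x v \<in> \<int>"
    using assms(3) zspan_iff_representation[OF assms(1)] by auto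
  have span_iff: "x \<in> span (D - J) \<longleftrightarrow> (\<forall>e\<in>J. representation D x e = 0)"
    using span_subset_iff_representation[OF assms(1) _ x(1), of "D - J"] assms(2)
    by (simp add: double_diff)
  have "x \<in> span (D - J) \<Longrightarrow> representation (D - J) x = representation D x"
    using real_vector.representation_extend[OF assms(1), of x "D - J"] by auto
  then show ?thesis
    using zspan_iff_representation[OF indep] span_iff x(2) by auto
qed

lemma image_add_eq_iff_diff_mem:
  fixes H :: "'a::ab_group_add set"
  assumes "0 \<in> H" and diff_mem: "\<And>a b. a \<in> H \<Longrightarrow> b \<in> H \<Longrightarrow> a - b \<in> H"
  shows "(+) x ` H = (+) y ` H \<longleftrightarrow> x - y \<in> H"
proof
  assume "(+) x ` H = (+) y ` H"
  then obtain h where "h \<in> H" "x + 0 = y + h"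
    using assms(1) by (metis image_eqI imageE)
  then show "x - y \<in> H" by (simp add: algebra_simps)
next
  assume xy: "x - y \<in> H"
  have add_mem: "a + b \<in> H" if "a \<in> H" "b \<in> H" for a b
    using diff_mem[OF that(1) diff_mem[OF assms(1) that(2)]] by simp
  have "(+) x ` H \<subseteq> (+) y ` H" if "x - y \<in> H" for x y
  proof
    fix z assume "z \<in> (+) x ` H"
    then obtain h where "h \<in> H" "z = x + h" by blast
    then show "z \<in> (+) y ` H"
      using add_mem[OF that] by (intro image_eqI[of _ _ "x - y + h"]) auto
  qed
  moreover have "y - x \<in> H" using diff_mem[OF assms(1) xy] by simp
  ultimately show "(+) x ` H = (+) y ` H" using xy by blast
qed

lemma projJ_eq_iff:
  fixes D :: "'a::euclidean_space set"
  assumes "independent D"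
  shows "projJ D J x = projJ D J y \<longleftrightarrow> x - y \<in> zspan (D - J)"
proof -
  have "independent (D - J)" using assms by (rule independent_mono) blast
  then show ?thesis
    unfolding projJ_def by (intro image_add_eq_iff_diff_mem zspan_zero zspan_diff)
qed

lemma projJ_eq_iff_representation:
  fixes D :: "'a::euclidean_space set"
  assumes "independent D" "J \<subseteq> D" "x \<in> zspan D" "y \<in> zspan D"
  shows "projJ D J x = projJ D J y \<longleftrightarrow> (\<forall>e\<in>J. representation D x e = representation D y e)"
proof -
  have "x \<in> span D" "y \<in> span D"
    using assms(3,4) zspan_iff_representation[OF assms(1)] by auto
  then show ?thesis
    using zspan_Diff_iff[OF assms(1,2) zspan_diff[OF assms(1,3,4)]]
    by (simp add: projJ_eq_iff[OF assms(1)] real_vector.representation_diff assms(1))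
qed

lemma projJ_not_collinear:
  fixes D :: "'a::euclidean_space set"
  assumes D: "independent D" "J \<subseteq> D" and x: "x \<in> zspan D"
    and "d \<in> J" "e \<in> J" "e \<noteq> d" "representation D x e \<noteq> 0"
  shows "\<not> (\<exists>p q :: int. (p, q) \<noteq> (0, 0) \<and>
            projJ D J (of_int p *\<^sub>R x + of_int q *\<^sub>R d) = projJ D J 0)"
proof clarify
  fix p q :: int
  assume eq: "projJ D J (of_int p *\<^sub>R x + of_int q *\<^sub>R d) = projJ D J 0"
  have "d \<in> D" using assms by blast
  have x_span: "x \<in> span D" using x zspan_iff_representation[OF D(1)] by blast
  have "d \<in> zspan D" using \<open>d \<in> D\<close> zspan_superset by blast
  then have "of_int p *\<^sub>R x + of_int q *\<^sub>R d \<in> zspan D"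
    by (intro zspan_add zspan_scaleR_of_int D(1) x)
  then have coeffs: "\<forall>e'\<in>J. p * representation D x e' + q * (if e' = d then 1 else 0) = 0"
    using eq projJ_eq_iff_representation[OF D _ zspan_zero] \<open>d \<in> D\<close> x_span
    by (auto simp add: real_vector.representation_add real_vector.representation_scale
        real_vector.representation_basis span_add span_scale span_base D(1) real_vector.representation_zero)
  then have "p = 0" using assms(5-7) by auto
  then show "p = 0 \<and> q = 0" using coeffs assms(4) by auto
qed

lemma eq_if_inner_ge_both:
  fixes a d :: "'a::real_inner"
  assumes "a \<bullet> a \<le> a \<bullet> d" "d \<bullet> d \<le> a \<bullet> d"
  shows "a = d"
proof -
  have "(a - d) \<bullet> (a - d) = a \<bullet> a - 2 * (a \<bullet> d) + d \<bullet> d"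
    by (simp add: inner_diff_left inner_diff_right inner_commute)
  then have "(a - d) \<bullet> (a - d) = 0" using assms inner_ge_zero[of "a - d"] by linarith
  then show ?thesis by simp
qed

lemma Ints_pos_eq_1_or_ge_2:
  fixes x :: real
  assumes "x \<in> \<int>" "0 < x"
  shows "x = 1 \<or> 2 \<le> x"
  using assms by (elim Ints_cases) (simp; arith)

lemma root_system_reflect:
  assumes "root_system R" "a \<in> R" "b \<in> R"
  shows "b - (2 * (b \<bullet> a) / (a \<bullet> a)) *\<^sub>R a \<in> R" "2 * (b \<bullet> a) / (a \<bullet> a) \<in> \<int>"
  using assms unfolding root_system_def by auto

lemma root_system_uminus:
  assumes "root_system R" "a \<in> R"
  shows "- a \<in> R"
proof -
  have "a \<noteq> 0" using assms unfolding root_system_def by auto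
  then show ?thesis
    using root_system_reflect(1)[OF assms assms(2)] by (simp add: scaleR_2 algebra_simps)
qed

lemma root_system_diff_mem:
  assumes R: "root_system R" and "a \<in> R" "d \<in> R" "0 < a \<bullet> d" "a \<noteq> d"
  shows "a - d \<in> R"
proof -
  have "a \<noteq> 0" "d \<noteq> 0" using assms unfolding root_system_def by auto
  then have pos: "0 < a \<bullet> a" "0 < d \<bullet> d" by auto
  define m n where "m = 2 * (a \<bullet> d) / (d \<bullet> d)" and "n = 2 * (d \<bullet> a) / (a \<bullet> a)"
  have "m \<in> \<int>" "n \<in> \<int>"
    using root_system_reflect(2)[OF R] assms(2,3) unfolding m_def n_def by auto
  moreover have "0 < m" "0 < n"
    using assms(4) pos unfolding m_def n_def by (auto simp: inner_commute)
  ultimately consider "m = 1" | "n = 1" | "2 \<le> m" "2 \<le> n"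
    using Ints_pos_eq_1_or_ge_2 by blast
  then show ?thesis
  proof cases
    case 1
    have "a - m *\<^sub>R d \<in> R" unfolding m_def by (rule root_system_reflect(1)[OF R assms(3,2)])
    with 1 show ?thesis by simp
  next
    case 2
    have "d - n *\<^sub>R a \<in> R" unfolding n_def by (rule root_system_reflect(1)[OF R assms(2,3)])
    with 2 have "d - a \<in> R" by simp
    then show ?thesis using root_system_uminus[OF R] by fastforce
  next
    case 3
    then have "d \<bullet> d \<le> a \<bullet> d" "a \<bullet> a \<le> a \<bullet> d"
      using pos unfolding m_def n_def by (auto simp: field_simps inner_commute)
    then show ?thesis using eq_if_inner_ge_both \<open>a \<noteq> d\<close> by blast
  qed
qed

lemma is_baseD:
  assumes "is_base R D"
  shows "D \<subseteq> R" "independent D" "span D = UNIV"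
  using assms unfolding is_base_def by auto

lemma roots_subset_zspan:
  assumes "is_base R D"
  shows "R \<subseteq> zspan D"
proof
  fix b assume "b \<in> R"
  then obtain c :: "'a \<Rightarrow> int" where "b = (\<Sum>d\<in>D. of_int (c d) *\<^sub>R d)"
    using assms unfolding is_base_def by blast
  then show "b \<in> zspan D"
    using finiteI_independent[OF is_baseD(2)[OF assms]] unfolding zspan_def by blast
qed

lemma pos_roots_iff_representation:
  assumes "is_base R D"
  shows "b \<in> pos_roots R D \<longleftrightarrow> b \<in> R \<and> (\<forall>d\<in>D. 0 \<le> representation D b d)"
proof -
  have coeffs: "representation D (\<Sum>d\<in>D. of_int (c d) *\<^sub>R d) d = of_int (c d)" if "d \<in> D"
    for c :: "'a \<Rightarrow> int" and d
    using representation_lincomb[OF is_baseD(2)[OF assms]] that by simp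
  show ?thesis
  proof
    assume "b \<in> pos_roots R D"
    then show "b \<in> R \<and> (\<forall>d\<in>D. 0 \<le> representation D b d)"
      unfolding pos_roots_def using coeffs by auto
  next
    assume b: "b \<in> R \<and> (\<forall>d\<in>D. 0 \<le> representation D b d)"
    then obtain c :: "'a \<Rightarrow> int" where "b = (\<Sum>d\<in>D. of_int (c d) *\<^sub>R d)"
      using assms unfolding is_base_def by blast
    with b show "b \<in> pos_roots R D"
      unfolding pos_roots_def using coeffs by fastforce
  qed
qed

lemma exists_representation_pos_inner_pos:
  fixes x :: "'a::euclidean_space"
  assumes "independent D" "x \<in> span D" "x \<noteq> 0" "\<forall>d\<in>D. 0 \<le> representation D x d"
  shows "\<exists>d\<in>D. 0 < representation D x d \<and> 0 < x \<bullet> d"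
proof -
  have "0 < x \<bullet> x" using assms(3) by simp
  also have "x \<bullet> x = x \<bullet> (\<Sum>d\<in>D. representation D x d *\<^sub>R d)"
    using assms(1,2) finiteI_independent[OF assms(1)] by (simp add: real_vector.sum_representation_eq)
  also have "\<dots> = (\<Sum>d\<in>D. representation D x d * (x \<bullet> d))"
    by (simp add: inner_sum_right)
  finally have "0 < (\<Sum>d\<in>D. representation D x d * (x \<bullet> d))" .
  then obtain d where "d \<in> D" "0 < representation D x d * (x \<bullet> d)"
    using sum_nonpos[of D "\<lambda>d. representation D x d * (x \<bullet> d)"] by (auto simp: not_less[symmetric])
  then show ?thesis using assms(4) by (auto simp: zero_less_mult_iff)
qed

lemma pos_root_diff_simple_root:
  assumes R: "root_system R" and D: "is_base R D"
    and b: "b \<in> pos_roots R D" "b \<notin> D"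
  shows "\<exists>d\<in>D. b - d \<in> pos_roots R D"
proof -
  note indep = is_baseD(2)[OF D] and span = is_baseD(3)[OF D]
  have "b \<in> R" and b_nonneg: "\<forall>d\<in>D. 0 \<le> representation D b d"
    using b(1) pos_roots_iff_representation[OF D] by auto
  moreover have "b \<noteq> 0" using \<open>b \<in> R\<close> R unfolding root_system_def by auto
  ultimately obtain d where d: "d \<in> D" "0 < representation D b d" "0 < b \<bullet> d"
    using exists_representation_pos_inner_pos[OF indep] span by blast
  have "representation D b d \<in> \<int>"
    using \<open>b \<in> R\<close> d(1) roots_subset_zspan[OF D] zspan_iff_representation[OF indep] by blast
  then have "1 \<le> representation D b d"
    using d(2) Ints_nonzero_abs_ge1[of "representation D b d"] by simp
  moreover have "b - d \<in> R"
    using root_system_diff_mem[OF R \<open>b \<in> R\<close> _ d(3)] d(1) b(2) is_baseD(1)[OF D] by blast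
  moreover have "representation D (b - d) = (\<lambda>e. representation D b e - (if e = d then 1 else 0))"
    using real_vector.representation_diff[OF indep] real_vector.representation_basis[OF indep d(1)]
    by (simp add: span)
  ultimately show ?thesis
    using d(1) b_nonneg pos_roots_iff_representation[OF D] by auto
qed

lemma projJ_coeffs_not_concentrated:
  assumes D: "is_base R D" "J \<subseteq> D" and b: "b \<in> pos_roots R D"
    and nonzero: "projJ D J b \<noteq> projJ D J 0"
    and not_multiple: "\<forall>d\<in>D. projJ D J d \<noteq> projJ D J 0 \<longrightarrow>
            (\<forall>m::nat. m \<ge> 1 \<longrightarrow> projJ D J b \<noteq> projJ D J (of_nat m *\<^sub>R d))"
  shows "\<exists>e\<in>J. e \<noteq> d \<and> representation D b e \<noteq> 0"
proof (rule ccontr)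
  assume "\<not> ?thesis"
  then have off_d: "\<forall>e\<in>J. e \<noteq> d \<longrightarrow> representation D b e = 0" by blast
  note indep = is_baseD(2)[OF D(1)] and span = is_baseD(3)[OF D(1)]
  note proj_iff = projJ_eq_iff_representation[OF indep D(2)]
  have "b \<in> R" "\<forall>d\<in>D. 0 \<le> representation D b d"
    using b pos_roots_iff_representation[OF D(1)] by auto
  have b_zspan: "b \<in> zspan D" using \<open>b \<in> R\<close> roots_subset_zspan[OF D(1)] by blast
  show False
  proof (cases "d \<in> J \<and> representation D b d \<noteq> 0")
    case True
    then have "d \<in> D" using D(2) by blast
    have "representation D b d \<in> \<int>"
      using b_zspan \<open>d \<in> D\<close> zspan_iff_representation[OF indep] by blast
    then obtain k :: int where k: "representation D b d = of_int k" by (elim Ints_cases)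
    moreover have "1 \<le> k"
      using k True \<open>\<forall>d\<in>D. 0 \<le> representation D b d\<close> \<open>d \<in> D\<close> by force
    ultimately obtain m :: nat where m: "representation D b d = of_nat m" "m \<ge> 1"
      by (intro that[of "nat k"]) auto
    have d_zspan: "d \<in> zspan D" using \<open>d \<in> D\<close> zspan_superset by blast
    have rep_d: "representation D d = (\<lambda>e. if e = d then 1 else 0)"
      using real_vector.representation_basis[OF indep \<open>d \<in> D\<close>] .
    have "projJ D J d \<noteq> projJ D J 0"
      using True proj_iff[OF d_zspan zspan_zero] rep_d
      by (auto simp: real_vector.representation_zero)
    moreover have "projJ D J b = projJ D J (of_nat m *\<^sub>R d)"
      using zspan_scaleR_of_int[OF indep d_zspan, of "int m"] off_d m(1) rep_d
      by (auto simp: proj_iff[OF b_zspan] real_vector.representation_scale indep span)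
    ultimately show False using not_multiple \<open>d \<in> D\<close> m(2) by blast
  next
    case False
    then have "projJ D J b = projJ D J 0"
      using off_d by (auto simp: proj_iff[OF b_zspan zspan_zero] real_vector.representation_zero)
    then show False using nonzero by blast
  qed
qed

lemma projJ_fibre_min_pos_root:
  assumes R: "root_system R" and D: "is_base R D" "J \<subseteq> D" and b: "b \<in> pos_roots R D"
  shows "\<exists>b0\<in>pos_roots R D. projJ D J b0 = projJ D J b \<and>
           (\<forall>d\<in>D. b0 - d \<in> pos_roots R D \<longrightarrow> d \<in> J)"
proof -
  note indep = is_baseD(2)[OF D(1)] and span = is_baseD(3)[OF D(1)]
  note pos_zspan = pos_roots_iff_representation[OF D(1)] roots_subset_zspan[OF D(1)]
  define T where "T = {x \<in> pos_roots R D. projJ D J x = projJ D J b}"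
  define height where "height x = (\<Sum>d\<in>D. representation D x d)" for x
  have "finite T" "b \<in> T"
    using R b finite_subset[of T R] unfolding T_def pos_roots_def root_system_def by auto
  then obtain b0 where "b0 \<in> T" and b0_min: "\<forall>x\<in>T. \<not> height x < height b0"
    using arg_min_if_finite[of T height] by blast
  then have b0: "b0 \<in> pos_roots R D" "projJ D J b0 = projJ D J b" unfolding T_def by auto
  have "d \<in> J" if d: "d \<in> D" "b0 - d \<in> pos_roots R D" for d
  proof (rule ccontr)
    assume "d \<notin> J"
    have rep_diff: "representation D (b0 - d) = (\<lambda>e. representation D b0 e - (if e = d then 1 else 0))"
      using real_vector.representation_diff[OF indep] real_vector.representation_basis[OF indep d(1)]
      by (simp add: span)
    have "b0 \<in> zspan D" "b0 - d \<in> zspan D" using b0(1) d(2) pos_zspan by blast+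
    then have "projJ D J (b0 - d) = projJ D J b0"
      using \<open>d \<notin> J\<close> by (auto simp: projJ_eq_iff_representation[OF indep D(2)] rep_diff)
    then have "b0 - d \<in> T" using d(2) b0(2) unfolding T_def by simp
    moreover have "height (b0 - d) = height b0 - 1"
      using d(1) finiteI_independent[OF indep] by (simp add: height_def rep_diff sum_subtractf)
    ultimately show False using b0_min by fastforce
  qed
  then show ?thesis using b0 by blast
qed

theorem lemma4p3:
  fixes R D J :: "'a::euclidean_space set" and b :: 'a
  assumes "root_system R"
    and "is_base R D"
    and "J \<subseteq> D"
    and "b \<in> pos_roots R D"
    and "projJ D J b \<noteq> projJ D J 0"
    and "\<forall>d\<in>D. projJ D J d \<noteq> projJ D J 0 \<longrightarrow>
            (\<forall>m::nat. m \<ge> 1 \<longrightarrow> projJ D J b \<noteq> projJ D J (of_nat m *\<^sub>R d))"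
  shows "\<exists>b'\<in>pos_roots R D. \<exists>j\<in>J.
           projJ D J b' \<noteq> projJ D J 0 \<and>
           projJ D J b = projJ D J (b' + j) \<and>
           \<not> (\<exists>p q :: int. (p, q) \<noteq> (0, 0) \<and>
                projJ D J (of_int p *\<^sub>R b' + of_int q *\<^sub>R j) = projJ D J 0)"
proof -
  note indep = is_baseD(2)[OF assms(2)] and span = is_baseD(3)[OF assms(2)]
  obtain b0 where b0: "b0 \<in> pos_roots R D" "projJ D J b0 = projJ D J b"
    and descent_in_J: "\<forall>d\<in>D. b0 - d \<in> pos_roots R D \<longrightarrow> d \<in> J"
    using projJ_fibre_min_pos_root[OF assms(1-4)] by blast
  have spread: "\<exists>e\<in>J. e \<noteq> d \<and> representation D b0 e \<noteq> 0" for d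
    using projJ_coeffs_not_concentrated[OF assms(2,3) b0(1)] assms(5,6) b0(2) by simp
  have "b0 \<notin> D"
  proof
    assume "b0 \<in> D"
    then have "representation D b0 e = 0" if "e \<noteq> b0" for e
      using that real_vector.representation_basis[OF indep] by simp
    then show False using spread[of b0] by blast
  qed
  then obtain d where d: "d \<in> D" "b0 - d \<in> pos_roots R D" "d \<in> J"
    using pos_root_diff_simple_root[OF assms(1,2) b0(1)] descent_in_J by blast
  obtain e where e: "e \<in> J" "e \<noteq> d" "representation D b0 e \<noteq> 0"
    using spread by blast
  have "representation D (b0 - d) e = representation D b0 e"
    using e(2) real_vector.representation_diff[OF indep] real_vector.representation_basis[OF indep d(1)]
    by (simp add: span)
  moreover have "b0 - d \<in> zspan D"
    using d(2) pos_roots_iff_representation[OF assms(2)] roots_subset_zspan[OF assms(2)] by blast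
  ultimately have not_collinear:
      "\<not> (\<exists>p q :: int. (p, q) \<noteq> (0, 0) \<and> projJ D J (of_int p *\<^sub>R (b0 - d) + of_int q *\<^sub>R d) = projJ D J 0)"
    using projJ_not_collinear[OF indep assms(3) _ d(3) e(1,2)] e(3) by simp
  moreover have "projJ D J (b0 - d) \<noteq> projJ D J 0"
    using not_collinear[simplified, rule_format, of 1 0] by simp
  moreover have "projJ D J b = projJ D J ((b0 - d) + d)" using b0(2) by simp
  ultimately show ?thesis using d(2,3) by blast
qed

end
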